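(* Let $g$ be an invertible, ergodic measure preserving transformation of a probability space $(X,\nu)$ with no periodic points. Let $B\subset X$ be measurable with $\nu(B)>0$, and let $N:B\to\{1,2,3,\dots\}$ be a measurable function such that $\tilde g(x):=g^{N(x)}(x)\in B$ for almost every $x\in B$ and $\int_B N\,d\nu<\infty$. Let $B'\subset B$ be a measurable set with $\nu(B')>0$, $\tilde g(B')=B'$, and $g_*=\tilde g|_{B'}$ invertible and $\nu$-preserving. Let $C\subset B'$ be a measurable subset with $\nu(C)>0$ and $g_*(C)=C$. Then $$\int_C N(x)\,d\nu\ge 1.$$ *)

theory Defs
  imports "HOL-Probability.Probability"
begin

definition measure_preserving_map :: "'a measure \<Rightarrow> ('a \<Rightarrow> 'a) \<Rightarrow> bool" where
  "measure_preserving_map M T \<longleftrightarrow>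
     T \<in> measurable M M \<and> (\<forall>A\<in>sets M. emeasure M (T -` A \<inter> space M) = emeasure M A)"

definition invertible_mpt :: "'a measure \<Rightarrow> ('a \<Rightarrow> 'a) \<Rightarrow> bool" where
  "invertible_mpt M T \<longleftrightarrow>
     measure_preserving_map M T \<and> bij_betw T (space M) (space M) \<and>
     the_inv_into (space M) T \<in> measurable M M"

definition ergodic :: "'a measure \<Rightarrow> ('a \<Rightarrow> 'a) \<Rightarrow> bool" where
  "ergodic M T \<longleftrightarrow>
     (\<forall>A\<in>sets M. T -` A \<inter> space M = A \<longrightarrow> emeasure M A = 0 \<or> emeasure M A = 1)"

definition no_periodic_points :: "'a measure \<Rightarrow> ('a \<Rightarrow> 'a) \<Rightarrow> bool" where
  "no_periodic_points M T \<longleftrightarrow> (\<forall>x\<in>space M. \<forall>n::nat. n > 0 \<longrightarrow> (T ^^ n) x \<noteq> x)"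

definition induced_map :: "('a \<Rightarrow> 'a) \<Rightarrow> ('a \<Rightarrow> nat) \<Rightarrow> 'a \<Rightarrow> 'a" where
  "induced_map g N x = (g ^^ N x) x"

end

theory Submission
  imports Defs
begin

text \<open>
  The orbit segments \<open>x, g x, \<dots>, g\<^bsup>N x - 1\<^esup> x\<close> for \<open>x \<in> C\<close> form a tower over \<open>C\<close>.
  Since the induced map permutes \<open>C\<close> and \<open>g\<close> is injective, this tower is exactly
  \<open>g\<close>-invariant, so by ergodicity it has full measure. On the other hand \<open>g\<close> preserves
  measure, so the tower has measure at most the sum of the measures of its floors
  \<open>g\<^sup>k {x \<in> C. k < N x}\<close>, which is \<open>\<integral>\<^sub>C N\<close>. Only the invertibility and ergodicity
  of \<open>g\<close>, the measurability of \<open>N\<close> and \<open>N \<ge> 1\<close> on \<open>B \<supseteq> C\<close>, and \<open>g\<^sub>* C = C\<close> are used.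
\<close>

lemma invertible_mpt_image:
  assumes "invertible_mpt M T" and "A \<in> sets M"
  shows "T ` A \<in> sets M" and "emeasure M (T ` A) = emeasure M A"
proof -
  have mpt: "measure_preserving_map M T" and bij: "bij_betw T (space M) (space M)"
    and inv: "the_inv_into (space M) T \<in> measurable M M"
    using assms(1) by (auto simp: invertible_mpt_def)
  have inj: "inj_on T (space M)" using bij by (rule bij_betw_imp_inj_on)
  have A: "A \<subseteq> space M" using assms(2) by (rule sets.sets_into_space)
  have "T ` A = the_inv_into (space M) T -` A \<inter> space M"
    using bij A by (auto simp: bij_betw_def the_inv_into_f_f)
      (metis f_the_inv_into_f image_eqI)
  then show TA: "T ` A \<in> sets M"
    using measurable_sets[OF inv assms(2)] by simp
  have "T -` (T ` A) \<inter> space M = A"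
    using inj A by (auto simp: inj_on_def)
  then show "emeasure M (T ` A) = emeasure M A"
    using mpt TA by (metis measure_preserving_map_def)
qed

lemma invertible_mpt_funpow_image:
  assumes "invertible_mpt M T" and "A \<in> sets M"
  shows "(T ^^ k) ` A \<in> sets M \<and> emeasure M ((T ^^ k) ` A) = emeasure M A"
proof (induction k)
  case (Suc k)
  have "(T ^^ Suc k) ` A = T ` (T ^^ k) ` A" by (simp add: image_comp)
  then show ?case using Suc invertible_mpt_image[OF assms(1)] by simp
qed (use assms(2) in simp)

definition tower :: "('a \<Rightarrow> 'a) \<Rightarrow> ('a \<Rightarrow> nat) \<Rightarrow> 'a set \<Rightarrow> 'a set" where
  "tower g N C = (\<Union>k. (g ^^ k) ` {x \<in> C. k < N x})"

lemma base_subset_tower: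
  assumes "\<forall>x\<in>C. N x \<ge> 1"
  shows "C \<subseteq> tower g N C"
  using assms unfolding tower_def by (auto intro!: exI[of _ 0] simp: Suc_le_eq)

lemma tower_subset_space:
  assumes "g \<in> measurable M M" and "C \<subseteq> space M"
  shows "tower g N C \<subseteq> space M"
  using measurable_space[OF measurable_compose_n[OF assms(1)]] assms(2)
  unfolding tower_def by blast

lemma tower_step:
  assumes "y \<in> tower g N C" and "induced_map g N ` C \<subseteq> C" and "\<forall>x\<in>C. N x \<ge> 1"
  shows "g y \<in> tower g N C"
proof -
  obtain k x where x: "x \<in> C" "k < N x" "y = (g ^^ k) x"
    using assms(1) unfolding tower_def by auto
  show ?thesis
  proof (cases "Suc k < N x")
    case True
    then show ?thesis using x unfolding tower_def
      by (auto intro!: exI[of _ "Suc k"] simp: image_iff)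
  next
    case False
    then have "N x = Suc k" using x by simp
    then have "g y = induced_map g N x" using x by (simp add: induced_map_def)
    then show ?thesis using x assms(2) base_subset_tower[OF assms(3)] by auto
  qed
qed

lemma tower_step_back:
  assumes g: "g \<in> measurable M M" "inj_on g (space M)"
    and C: "C \<subseteq> space M" "C \<subseteq> induced_map g N ` C" "\<forall>x\<in>C. N x \<ge> 1"
    and y: "y \<in> space M" "g y \<in> tower g N C"
  shows "y \<in> tower g N C"
proof -
  have cancel: "y = (g ^^ j) x" if "g y = (g ^^ Suc j) x" "x \<in> C" for j x
    using that g C(1) y(1) measurable_space[OF measurable_compose_n[OF g(1)]]
    by (simp add: inj_on_def subset_iff)
  obtain k x where x: "x \<in> C" "k < N x" "g y = (g ^^ k) x"
    using y(2) unfolding tower_def by auto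
  show ?thesis
  proof (cases k)
    case (Suc j)
    then show ?thesis using x cancel unfolding tower_def by (auto intro!: exI[of _ j])
  next
    case 0
    then obtain z where z: "z \<in> C" "g y = induced_map g N z" using x C(2) by auto
    then obtain j where j: "N z = Suc j" using C(3) by (cases "N z") auto
    then show ?thesis using z cancel unfolding tower_def induced_map_def
      by (auto intro!: exI[of _ j])
  qed
qed

lemma tower_invariant:
  assumes "g \<in> measurable M M" "inj_on g (space M)"
    and "C \<subseteq> space M" "induced_map g N ` C = C" "\<forall>x\<in>C. N x \<ge> 1"
  shows "g -` tower g N C \<inter> space M = tower g N C"
  using tower_step[of _ g N C] tower_step_back[of g M C N] tower_subset_space[of g M C N] assms
  by auto

lemma tower_floor_sets:
  assumes "C \<in> sets M" and "N \<in> measurable (restrict_space M C) (count_space UNIV)"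
  shows "{x \<in> C. k < N x} \<in> sets M"
proof -
  have "{x \<in> space (restrict_space M C). k < N x} \<in> sets (restrict_space M C)"
    using assms(2) by measurable
  then show ?thesis
    using assms(1) by (simp add: sets_restrict_space_iff space_restrict_space)
qed

lemma suminf_indicator_less:
  "(\<Sum>k. indicator {x \<in> C. k < N x} x :: ennreal) = ennreal (real (N x)) * indicator C x"
proof -
  have "(\<Sum>k. indicator {x \<in> C. k < N x} x :: ennreal) = (\<Sum>k<(if x \<in> C then N x else 0). 1)"
    by (subst suminf_finite[of "{..<(if x \<in> C then N x else 0)}"])
      (auto simp: indicator_def lessThan_def)
  then show ?thesis by (auto simp: indicator_def ennreal_of_nat_eq_real_of_nat)
qed

lemma
  assumes "invertible_mpt M g" and "C \<in> sets M"
    and "N \<in> measurable (restrict_space M C) (count_space UNIV)"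
  shows sets_tower: "tower g N C \<in> sets M"
    and emeasure_tower_le: "emeasure M (tower g N C) \<le> (\<integral>\<^sup>+ x\<in>C. ennreal (real (N x)) \<partial>M)"
proof -
  note floors = tower_floor_sets[OF assms(2,3)]
  note images = invertible_mpt_funpow_image[OF assms(1) floors]
  show "tower g N C \<in> sets M" unfolding tower_def using images by auto
  have "emeasure M (tower g N C) \<le> (\<Sum>k. emeasure M ((g ^^ k) ` {x \<in> C. k < N x}))"
    unfolding tower_def using images by (intro emeasure_subadditive_countably) auto
  also have "\<dots> = (\<Sum>k. \<integral>\<^sup>+ x. indicator {x \<in> C. k < N x} x \<partial>M)"
    using images floors by simp
  also have "\<dots> = (\<integral>\<^sup>+ x. (\<Sum>k. indicator {x \<in> C. k < N x} x) \<partial>M)"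
    using floors by (intro nn_integral_suminf[symmetric]) auto
  also have "\<dots> = (\<integral>\<^sup>+ x\<in>C. ennreal (real (N x)) \<partial>M)"
    by (simp add: suminf_indicator_less)
  finally show "emeasure M (tower g N C) \<le> (\<integral>\<^sup>+ x\<in>C. ennreal (real (N x)) \<partial>M)" .
qed

theorem corollary3p8:
  fixes M :: "'a measure" and g :: "'a \<Rightarrow> 'a" and N :: "'a \<Rightarrow> nat"
    and B B' C :: "'a set"
  assumes "prob_space M"
    and g_mpt: "invertible_mpt M g"
    and g_ergodic: "ergodic M g"
    and "no_periodic_points M g"
    and "B \<in> sets M" and "emeasure M B > 0"
    and N_meas_B: "N \<in> measurable (restrict_space M B) (count_space UNIV)"
    and N_ge_1_B: "\<forall>x\<in>B. N x \<ge> 1"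
    and "AE x in M. x \<in> B \<longrightarrow> induced_map g N x \<in> B"
    and "(\<integral>\<^sup>+ x\<in>B. ennreal (real (N x)) \<partial>M) < \<infinity>"
    and "B' \<in> sets M" and B'_B: "B' \<subseteq> B" and "emeasure M B' > 0"
    and "induced_map g N ` B' = B'"
    and "invertible_mpt (restrict_space M B') (induced_map g N)"
    and C_sets: "C \<in> sets M" and C_B': "C \<subseteq> B'" and C_pos: "emeasure M C > 0"
    and C_invariant: "induced_map g N ` C = C"
  shows "(\<integral>\<^sup>+ x\<in>C. ennreal (real (N x)) \<partial>M) \<ge> 1"
proof -
  have g: "g \<in> measurable M M" "inj_on g (space M)"
    using g_mpt by (auto simp: invertible_mpt_def measure_preserving_map_def bij_betw_def)
  have C_B: "C \<subseteq> B" using B'_B C_B' by blast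
  have N_ge_1: "\<forall>x\<in>C. N x \<ge> 1" using N_ge_1_B C_B by blast
  have N_meas: "N \<in> measurable (restrict_space M C) (count_space UNIV)"
    using measurable_restrict_mono[OF N_meas_B C_B] .
  have C_space: "C \<subseteq> space M" using C_sets by (rule sets.sets_into_space)
  note tower_sets = sets_tower[OF g_mpt C_sets N_meas]
  have "0 < emeasure M C" by (fact C_pos)
  also have "\<dots> \<le> emeasure M (tower g N C)"
    using base_subset_tower[OF N_ge_1] tower_sets by (rule emeasure_mono)
  finally have "emeasure M (tower g N C) = 1"
    using g_ergodic tower_sets tower_invariant[OF g C_space C_invariant N_ge_1]
    unfolding ergodic_def by fastforce
  then show ?thesis using emeasure_tower_le[OF g_mpt C_sets N_meas] by simp
qed

end
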